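(* Let $\varepsilon=(\varepsilon_n)_{n\in\mathbb{Z}}$ be i.i.d. with $\mathbb{P}(\varepsilon_n=1)=\mathbb{P}(\varepsilon_n=-1)=1/2$, let $a_0,a_1\in\mathbb{R}$, and let $\omega_n=a_0\varepsilon_n+a_1\varepsilon_{n-1}$. Write $\omega_n=f(X_n)$ with $X_n=(\varepsilon_{n-1},\varepsilon_n)$, a Markov chain on $\Sigma=\{-1,+1\}^2$ started at its invariant (uniform) distribution, and $f(x_0,x_1)=a_0x_1+a_1x_0$. Then the Perron–Frobenius eigenvalue of the matrix $A(0,\beta,0)=\sum_{t\ge1}M(t,\beta,0)$ is $$\lambda(\beta)=\cosh(a_0\beta)\cosh(a_1\beta)\left(1+K(1)\left(\frac{\cosh((a_0+a_1)\beta)}{\cosh(a_0\beta)\cosh(a_1\beta)}-1\right)\right),$$ so that the annealed critical point of the pinning model with this disorder is $h_c^a(\beta)=-\log\lambda(\beta)$.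
   Context: $K(n)$, $n\ge1$, is a probability distribution on $\{1,2,\dots\}$ with $K(n)>0$ for all $n$ (the interarrival law of a recurrent renewal process $\tau$ with $\tau_0=0$). For a Markov chain with transition matrix $Q$ on finite $\Sigma$ and $f:\Sigma\to\mathbb{R}$, $M(t,\beta,h)(x,y)=K(t)Q^t(x,y)e^{\beta f(y)+h}$. The annealed critical point is $h_c^a(\beta)=\sup\{h: \lim_N \frac1N\log\mathbb{E}Z_{N,\beta,h,\omega}=0\}$, where $Z_{N,\beta,h,\omega}=E\big[\exp\big(\sum_{n=1}^N(\beta\omega_n+h)\mathbf 1_{\{n\in\tau\}}\big)\mathbf 1_{\{N\in\tau\}}\big]$ and $\mathbb{E}$ averages over $\omega$. *)

theory Defs
  imports Complex_Main "HOL-Library.FuncSet"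
begin

text \<open>State space Sigma = {-1,+1}^2; a state (x0,x1) = (eps_(n-1), eps_n).\<close>
definition Sig :: "(int \<times> int) set" where
  "Sig = {-1, 1} \<times> {-1, 1}"

text \<open>Transition matrix of X_n = (eps_(n-1), eps_n): (x0,x1) -> (x1,y1), y1 uniform.\<close>
definition Qm :: "int \<times> int \<Rightarrow> int \<times> int \<Rightarrow> real" where
  "Qm x y = (if fst y = snd x then 1/2 else 0)"

fun matpow :: "(int \<times> int \<Rightarrow> int \<times> int \<Rightarrow> real) \<Rightarrow> nat \<Rightarrow> int \<times> int \<Rightarrow> int \<times> int \<Rightarrow> real" where
  "matpow P 0 x y = (if x = y then 1 else 0)"
| "matpow P (Suc n) x y = (\<Sum>z\<in>Sig. matpow P n x z * P z y)"

definition fobs :: "real \<Rightarrow> real \<Rightarrow> int \<times> int \<Rightarrow> real" where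
  "fobs a0 a1 x = a0 * real_of_int (snd x) + a1 * real_of_int (fst x)"

definition Mmat :: "(nat \<Rightarrow> real) \<Rightarrow> real \<Rightarrow> real \<Rightarrow> nat \<Rightarrow> real \<Rightarrow> real
    \<Rightarrow> int \<times> int \<Rightarrow> int \<times> int \<Rightarrow> real" where
  "Mmat K a0 a1 t \<beta> h x y = K t * matpow Qm t x y * exp (\<beta> * fobs a0 a1 y + h)"

definition Amat :: "(nat \<Rightarrow> real) \<Rightarrow> real \<Rightarrow> real \<Rightarrow> real \<Rightarrow> real
    \<Rightarrow> int \<times> int \<Rightarrow> int \<times> int \<Rightarrow> real" where
  "Amat K a0 a1 \<beta> h x y = (\<Sum>t. Mmat K a0 a1 (Suc t) \<beta> h x y)"

definition is_eigenvalue :: "(int \<times> int \<Rightarrow> int \<times> int \<Rightarrow> real) \<Rightarrow> complex \<Rightarrow> bool" where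
  "is_eigenvalue B \<mu> \<longleftrightarrow> (\<exists>v :: int \<times> int \<Rightarrow> complex. (\<exists>x\<in>Sig. v x \<noteq> 0) \<and>
      (\<forall>x\<in>Sig. (\<Sum>y\<in>Sig. complex_of_real (B x y) * v y) = \<mu> * v x))"

definition pf_eigenvalue :: "(int \<times> int \<Rightarrow> int \<times> int \<Rightarrow> real) \<Rightarrow> real \<Rightarrow> bool" where
  "pf_eigenvalue B r \<longleftrightarrow> is_eigenvalue B (complex_of_real r) \<and>
      (\<forall>\<mu>. is_eigenvalue B \<mu> \<longrightarrow> cmod \<mu> \<le> r)"

fun renw :: "(nat \<Rightarrow> real) \<Rightarrow> nat \<Rightarrow> nat list \<Rightarrow> real" where
  "renw K p [] = 1"
| "renw K p (t # ts) = K (t - p) * renw K t ts"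

definition omega :: "real \<Rightarrow> real \<Rightarrow> (nat \<Rightarrow> int) \<Rightarrow> nat \<Rightarrow> real" where
  "omega a0 a1 e n = a0 * real_of_int (e n) + a1 * real_of_int (e (n - 1))"

text \<open>Annealed partition function E Z_(N,beta,h,omega): the renewal expectation is written as a
  sum over the possible sets tau \<inter> {1..N} containing N, the disorder expectation as the uniform
  average over (eps_0,...,eps_N) \<in> {-1,1}^(N+1).\<close>
definition Zann :: "(nat \<Rightarrow> real) \<Rightarrow> real \<Rightarrow> real \<Rightarrow> nat \<Rightarrow> real \<Rightarrow> real \<Rightarrow> real" where
  "Zann K a0 a1 N \<beta> h =
     (\<Sum>S\<in>{S. S \<subseteq> {1..N} \<and> N \<in> S}.
        renw K 0 (sorted_list_of_set S) *
        ((\<Sum>e\<in>PiE {0..N} (\<lambda>_. {-1, 1::int}).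
            exp (\<Sum>n\<in>S. \<beta> * omega a0 a1 e n + h)) / 2 ^ (N + 1)))"

definition hca :: "(nat \<Rightarrow> real) \<Rightarrow> real \<Rightarrow> real \<Rightarrow> real \<Rightarrow> real" where
  "hca K a0 a1 \<beta> = Sup {h. (\<lambda>N. ln (Zann K a0 a1 N \<beta> h) / real N) \<longlonglongrightarrow> 0}"

end

theory Submission
  imports Defs
begin

(*
  Averaging over eps factorizes the annealed partition function E Z_N into
  cosh-terms; conditioning on the last renewal before N then yields a renewal equation for E Z_N
  whose kernel is  e^h K(t) cosh(beta a0) cosh(beta a1)  for t >= 2, with cosh(beta (a0 + a1))
  instead of the product for t = 1.  Hence E Z_N is comparable, up to constant factors, with the
  renewal sequence of this effective kernel, whose total mass is  e^h lambda(beta).  The free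
  energy therefore vanishes at  h = - ln lambda  and is positive above it, which identifies h_c^a.
  On the matrix side, Q^t is uniform for t >= 2, so  A(0,beta,0)(x,y) = e^(beta a0 y1) G(x1,y0);
  for such "product form" matrices every non-zero eigenvalue equals  sum_(t,r) e^(beta a0 t) G(t,r),
  which is lambda(beta) again.
*)

(* The renewal sequence of a (possibly defective) kernel kt:  u_0 = 1,  u_n = sum_(m<n) u_m kt(n - m);
   for a probability kernel this is the probability that n is a renewal epoch. *)
function renewal :: "(nat \<Rightarrow> real) \<Rightarrow> nat \<Rightarrow> real" where
  "renewal kt n = (if n = 0 then 1 else (\<Sum>m<n. renewal kt m * kt (n - m)))"
  by auto
termination by (relation "measure (\<lambda>(kt, n). n)") auto

declare renewal.simps[simp del]

lemma renewal_0 [simp]: "renewal kt 0 = 1"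
  by (simp add: renewal.simps)

lemma renewal_eq: "n > 0 \<Longrightarrow> renewal kt n = (\<Sum>m<n. renewal kt m * kt (n - m))"
  by (subst renewal.simps) simp

lemma renewal_1: "renewal kt 1 = kt 1"
  by (simp add: renewal_eq)

lemma renewal_nonneg:
  fixes kt :: "nat \<Rightarrow> real"
  assumes "\<And>t. kt t \<ge> 0"
  shows "renewal kt n \<ge> 0"
proof (induction n rule: less_induct)
  case (less n)
  then show ?case
    by (cases "n = 0") (auto simp: renewal_eq intro!: sum_nonneg mult_nonneg_nonneg assms)
qed

(* Concatenating renewal paths: u is supermultiplicative. *)
lemma renewal_supermult:
  fixes kt :: "nat \<Rightarrow> real"
  assumes kt: "\<And>t. kt t \<ge> 0"
  shows "renewal kt (a + b) \<ge> renewal kt a * renewal kt b"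
proof (induction b rule: less_induct)
  case (less b)
  show ?case
  proof (cases "b = 0")
    case False
    have "renewal kt a * renewal kt b = (\<Sum>j<b. renewal kt a * renewal kt j * kt (b - j))"
      using False by (simp add: renewal_eq sum_distrib_left mult.assoc)
    also have "\<dots> \<le> (\<Sum>j<b. renewal kt (a + j) * kt (b - j))"
      by (intro sum_mono mult_right_mono less kt) auto
    also have "\<dots> = (\<Sum>m\<in>{a..<a+b}. renewal kt m * kt (a + b - m))"
      by (rule sum.reindex_bij_witness[of _ "\<lambda>m. m - a" "\<lambda>j. a + j"]) auto
    also have "\<dots> \<le> (\<Sum>m<a+b. renewal kt m * kt (a + b - m))"
      by (intro sum_mono2) (auto intro!: mult_nonneg_nonneg renewal_nonneg kt)
    also have "\<dots> = renewal kt (a + b)"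
      using False by (simp add: renewal_eq)
    finally show ?thesis .
  qed simp
qed

lemma renewal_power_le:
  fixes kt :: "nat \<Rightarrow> real"
  assumes kt: "\<And>t. kt t \<ge> 0"
  shows "renewal kt (k * n) \<ge> renewal kt n ^ k"
proof (induction k)
  case (Suc k)
  have "renewal kt n ^ Suc k \<le> renewal kt n * renewal kt (k * n)"
    by (simp add: Suc mult_left_mono renewal_nonneg kt)
  also have "\<dots> \<le> renewal kt (n + k * n)"
    by (rule renewal_supermult[OF kt])
  finally show ?case by (simp add: add.commute)
qed simp

lemma renewal_pos:
  fixes kt :: "nat \<Rightarrow> real"
  assumes kt: "\<And>t. kt t \<ge> 0" and k1: "kt 1 > 0"
  shows "renewal kt n > 0"
proof -
  have "0 < renewal kt 1 ^ n"
    using k1 by (simp add: renewal_1 del: One_nat_def)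
  also have "\<dots> \<le> renewal kt (n * 1)"
    by (rule renewal_power_le[OF kt])
  finally show ?thesis by simp
qed

lemma renewal_le_one:
  fixes kt :: "nat \<Rightarrow> real"
  assumes kt: "\<And>t. kt t \<ge> 0" and sk: "summable kt" and le: "suminf kt \<le> 1"
  shows "renewal kt n \<le> 1"
proof (induction n rule: less_induct)
  case (less n)
  show ?case
  proof (cases "n = 0")
    case False
    have "renewal kt n = (\<Sum>m<n. renewal kt m * kt (n - m))"
      using False by (simp add: renewal_eq)
    also have "\<dots> \<le> (\<Sum>m<n. kt (n - m))"
      by (intro sum_mono mult_left_le_one_le less renewal_nonneg kt) auto
    also have "\<dots> = (\<Sum>t\<in>{1..n}. kt t)"
      by (rule sum.reindex_bij_witness[of _ "\<lambda>t. n - t" "\<lambda>m. n - m"]) auto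
    also have "\<dots> \<le> (\<Sum>t<Suc n. kt t)"
      by (intro sum_mono2) (auto intro: kt)
    also have "\<dots> \<le> suminf kt"
      by (intro sum_le_suminf sk) (auto intro: kt)
    finally show ?thesis using le by simp
  qed simp
qed

lemma renewal_generating_function:
  fixes kt :: "nat \<Rightarrow> real"
  assumes kt: "\<And>t. kt t \<ge> 0" and k0: "kt 0 = 0" and s: "s \<ge> 0"
    and su: "summable (\<lambda>n. renewal kt n * s ^ n)" and sk: "summable (\<lambda>n. kt n * s ^ n)"
  shows "(\<Sum>n. renewal kt n * s ^ n) = 1 + (\<Sum>n. kt n * s ^ n) * (\<Sum>n. renewal kt n * s ^ n)"
proof -
  have conv: "(\<Sum>i\<le>k. (kt i * s ^ i) * (renewal kt (k - i) * s ^ (k - i)))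
        = renewal kt k * s ^ k - (if k = 0 then 1 else 0)" for k
  proof (cases "k = 0")
    case False
    have "(\<Sum>i\<le>k. (kt i * s ^ i) * (renewal kt (k - i) * s ^ (k - i)))
        = (\<Sum>i\<le>k. s ^ k * (kt i * renewal kt (k - i)))"
      by (intro sum.cong refl) (simp add: power_add[symmetric] algebra_simps)
    also have "\<dots> = s ^ k * (\<Sum>i\<le>k. kt i * renewal kt (k - i))"
      by (simp add: sum_distrib_left)
    also have "(\<Sum>i\<le>k. kt i * renewal kt (k - i)) = (\<Sum>i\<in>{1..k}. kt i * renewal kt (k - i))"
      using k0 by (intro sum.mono_neutral_right) (auto simp: not_le)
    also have "\<dots> = (\<Sum>m<k. renewal kt m * kt (k - m))"
      by (rule sum.reindex_bij_witness[of _ "\<lambda>m. k - m" "\<lambda>i. k - i"]) auto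
    also have "\<dots> = renewal kt k"
      using False by (simp add: renewal_eq)
    finally show ?thesis using False by simp
  qed (use k0 in simp)
  have "summable (\<lambda>k. norm (kt k * s ^ k))" "summable (\<lambda>k. norm (renewal kt k * s ^ k))"
    using sk su kt renewal_nonneg[OF kt] s by simp_all
  from Cauchy_product_sums[OF this]
  have "(\<lambda>k. renewal kt k * s ^ k - (if k = 0 then 1 else 0)) sums
      ((\<Sum>n. kt n * s ^ n) * (\<Sum>n. renewal kt n * s ^ n))"
    by (simp only: conv)
  moreover have "(\<lambda>k. renewal kt k * s ^ k - (if k = 0 then 1 else 0)) sums
      ((\<Sum>n. renewal kt n * s ^ n) - 1)"
    using sums_diff[OF summable_sums[OF su] sums_single[of 0 "\<lambda>_. 1::real"]] by simp
  ultimately show ?thesis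
    using sums_unique2 by fastforce
qed

(* For a probability kernel, u cannot decay exponentially: otherwise U(1) would be finite and
   the generating-function identity would give  U(1) = 1 + U(1). *)
lemma renewal_not_exp_small:
  fixes kt :: "nat \<Rightarrow> real" and \<epsilon> :: real
  assumes kt: "\<And>t. kt t \<ge> 0" and k0: "kt 0 = 0" and ks: "kt sums 1" and e: "\<epsilon> > 0"
  shows "\<exists>k\<ge>1. renewal kt k \<ge> exp (- \<epsilon> * k)"
proof (rule ccontr)
  assume none: "\<not> ?thesis"
  have small: "norm (renewal kt k) \<le> exp (- \<epsilon>) ^ k" for k
  proof (cases "k = 0")
    case False
    then have "k \<ge> 1" by simp
    with none have "\<not> exp (- \<epsilon> * k) \<le> renewal kt k" by blast
    then show ?thesis
      using renewal_nonneg[of kt k, OF kt] by (simp add: exp_of_nat_mult[symmetric] mult.commute)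
  qed simp
  have su: "summable (renewal kt)"
    by (rule summable_comparison_test[OF _ summable_geometric[of "exp (- \<epsilon>)"]])
       (use small e in auto)
  have "(\<Sum>n. renewal kt n * 1 ^ n) = 1 + (\<Sum>n. kt n * 1 ^ n) * (\<Sum>n. renewal kt n * 1 ^ n)"
    by (rule renewal_generating_function[of kt, OF kt k0]) (use su ks in \<open>auto simp: sums_iff\<close>)
  then show False
    using ks by (simp add: sums_iff)
qed

(* Combined with supermultiplicativity this gives subexponential decay:  ln u_n >= - eps n
   eventually, for every eps > 0. *)
lemma renewal_subexponential:
  fixes kt :: "nat \<Rightarrow> real" and \<epsilon> :: real
  assumes kt: "\<And>t. kt t \<ge> 0" and k0: "kt 0 = 0" and k1: "kt 1 > 0" and ks: "kt sums 1"
    and e: "\<epsilon> > 0"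
  shows "eventually (\<lambda>n. ln (renewal kt n) \<ge> - \<epsilon> * n) sequentially"
proof -
  obtain k where k: "k \<ge> 1" "renewal kt k \<ge> exp (- (\<epsilon> / 2) * k)"
    using renewal_not_exp_small[of kt "\<epsilon> / 2", OF kt k0 ks] e by auto
  define m where "m = Min (renewal kt ` {..<k})"
  have m_pos: "m > 0"
    unfolding m_def using k(1) renewal_pos[of kt, OF kt k1]
    by (subst Min_gr_iff) (auto simp: lessThan_empty_iff)
  have bound: "renewal kt n \<ge> m * exp (- (\<epsilon> / 2) * n)" for n
  proof -
    define q r where "q = n div k" and "r = n mod k"
    have n: "n = r + q * k" by (simp add: q_def r_def)
    have "m \<le> renewal kt r"
      using k(1) by (simp add: m_def r_def)
    moreover have "exp (- (\<epsilon> / 2) * n) \<le> exp (- (\<epsilon> / 2) * k) ^ q"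
      using e by (simp add: n exp_of_nat_mult[symmetric] algebra_simps)
    moreover have "exp (- (\<epsilon> / 2) * k) ^ q \<le> renewal kt (q * k)"
      using k(2) renewal_power_le[of kt, OF kt, where k=q and n=k] by (meson exp_ge_zero order_trans power_mono)
    ultimately have "m * exp (- (\<epsilon> / 2) * n) \<le> renewal kt r * renewal kt (q * k)"
      using m_pos by (intro mult_mono) auto
    also have "\<dots> \<le> renewal kt n"
      unfolding n by (rule renewal_supermult[OF kt])
    finally show ?thesis .
  qed
  have "ln (renewal kt n) \<ge> - \<epsilon> * n" if n: "n \<ge> nat \<lceil>- 2 * ln m / \<epsilon>\<rceil>" for n
  proof -
    have "ln m - (\<epsilon> / 2) * n \<le> ln (renewal kt n)"
      using bound[of n] m_pos renewal_pos[of kt n, OF kt k1] ln_mono[of "m * exp (- (\<epsilon> / 2) * n)"]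
      by (simp add: ln_mult)
    moreover have "- 2 * ln m / \<epsilon> \<le> n"
      using n by linarith
    then have "- ln m \<le> (\<epsilon> / 2) * n"
      using e by (simp add: field_simps)
    ultimately show ?thesis by linarith
  qed
  then show ?thesis
    unfolding eventually_sequentially by blast
qed

lemma subcritical_tilt:
  fixes kt :: "nat \<Rightarrow> real"
  assumes kt: "\<And>t. kt t \<ge> 0" and sk: "summable kt" and gt: "suminf kt > 1"
  obtains s where "0 < s" "s < 1" "summable (\<lambda>n. kt n * s ^ n)" "(\<Sum>n. kt n * s ^ n) \<ge> 1"
proof -
  obtain T where T: "(\<Sum>t<T. kt t) > 1"
    using gt summable_LIMSEQ[OF sk] order_tendstoD(1) eventually_sequentially by (metis order.refl)
  define p where "p = (\<Sum>t<T. kt t)"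
  have p1: "p > 1" and T0: "T > 0"
    using T by (auto simp: p_def intro: Nat.gr0I)
  define s where "s = root T (1 / p)"
  have s0: "s > 0" and s1: "s < 1" and sT: "s ^ T = 1 / p"
    unfolding s_def using p1 T0 by (simp_all add: real_root_lt_1_iff)
  have summ: "summable (\<lambda>n. kt n * s ^ n)"
    by (rule summable_comparison_test[OF _ sk])
       (use kt s0 s1 in \<open>auto intro!: exI[of _ 0] mult_right_le_one_le power_le_one\<close>)
  have "1 = (\<Sum>t<T. kt t * s ^ T)"
    using sT p1 by (simp add: sum_divide_distrib[symmetric] p_def[symmetric])
  also have "\<dots> \<le> (\<Sum>t<T. kt t * s ^ t)"
    by (intro sum_mono mult_left_mono kt power_decreasing) (use s0 s1 in auto)
  also have "\<dots> \<le> (\<Sum>n. kt n * s ^ n)"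
    by (intro sum_le_suminf summ) (use kt s0 in auto)
  finally show ?thesis using that s0 s1 summ by blast
qed

(* For a kernel of mass > 1 some u_n exceeds 1: otherwise the tilted generating-function
   identity  U(s) = 1 + K(s) U(s)  with  K(s) >= 1  would be contradictory. *)
lemma renewal_exceeds_one:
  fixes kt :: "nat \<Rightarrow> real"
  assumes kt: "\<And>t. kt t \<ge> 0" and k0: "kt 0 = 0" and sk: "summable kt" and gt: "suminf kt > 1"
  shows "\<exists>n. renewal kt n > 1"
proof (rule ccontr)
  assume "\<not> ?thesis"
  then have le1: "renewal kt n \<le> 1" for n by (simp add: not_less)
  obtain s where s: "0 < s" "s < 1" and sk2: "summable (\<lambda>n. kt n * s ^ n)"
    and K1: "(\<Sum>n. kt n * s ^ n) \<ge> 1"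
    using subcritical_tilt[OF kt sk gt] by blast
  have su: "summable (\<lambda>n. renewal kt n * s ^ n)"
    by (rule summable_comparison_test[OF _ summable_geometric[of s]])
       (use le1 s renewal_nonneg[OF kt] in \<open>auto intro!: exI[of _ 0] mult_left_le_one_le simp: abs_mult\<close>)
  have U0: "(\<Sum>n. renewal kt n * s ^ n) \<ge> 0"
    by (intro suminf_nonneg su) (use renewal_nonneg[OF kt] s in auto)
  have "(\<Sum>n. renewal kt n * s ^ n) = 1 + (\<Sum>n. kt n * s ^ n) * (\<Sum>n. renewal kt n * s ^ n)"
    by (rule renewal_generating_function[of kt, OF kt k0 _ su sk2]) (use s in simp)
  moreover have "(\<Sum>n. kt n * s ^ n) * (\<Sum>n. renewal kt n * s ^ n) \<ge> (\<Sum>n. renewal kt n * s ^ n)"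
    using K1 U0 by (metis mult_right_mono mult_1)
  ultimately show False by linarith
qed

lemma ln_growth_tendsto_zero:
  fixes Z :: "nat \<Rightarrow> real" and C :: real
  assumes lower: "\<And>\<epsilon> :: real. \<epsilon> > 0 \<Longrightarrow> eventually (\<lambda>n. - \<epsilon> * n \<le> ln (Z n)) sequentially"
    and upper: "eventually (\<lambda>n. ln (Z n) \<le> C) sequentially"
  shows "(\<lambda>n. ln (Z n) / real n) \<longlonglongrightarrow> 0"
proof (rule order_tendstoI)
  fix a :: real assume a: "a < 0"
  have "- a / 2 > 0" using a by simp
  from lower[OF this] have "eventually (\<lambda>n. - (- a / 2) * n \<le> ln (Z n)) sequentially" .
  moreover have "eventually (\<lambda>n. n > (0 :: nat)) sequentially"
    by (rule eventually_gt_at_top)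
  ultimately show "eventually (\<lambda>n. a < ln (Z n) / real n) sequentially"
  proof eventually_elim
    case (elim n)
    have "a * n < - (- a / 2) * n"
      using a elim(2) by (simp add: mult_neg_pos)
    with elim(1) have "a * n < ln (Z n)" by linarith
    then show ?case using elim(2) by (simp add: field_simps)
  qed
next
  fix a :: real assume a: "a > 0"
  have "eventually (\<lambda>n. real n > \<bar>C\<bar> / a) sequentially"
    by (rule eventually_gt_at_top[THEN eventually_mono, of "nat \<lceil>\<bar>C\<bar> / a\<rceil>"]) linarith
  with upper show "eventually (\<lambda>n. ln (Z n) / real n < a) sequentially"
  proof eventually_elim
    case (elim n)
    then have "C < a * n" using a by (simp add: field_simps)
    with elim(1) have "ln (Z n) < a * n" by linarith
    then show ?case
      using a by (cases "n = 0") (simp_all add: pos_divide_less_eq)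
  qed
qed

lemma free_energy_zero_of_comparable:
  fixes kt Z :: "nat \<Rightarrow> real" and r R :: real
  assumes kt: "\<And>t. kt t \<ge> 0" and k0: "kt 0 = 0" and k1: "kt 1 > 0" and ks: "kt sums 1"
    and r: "r > 0" and R: "R > 0"
    and bnd: "\<And>n. n \<ge> 1 \<Longrightarrow> r * renewal kt n \<le> Z n \<and> Z n \<le> R * renewal kt n"
  shows "(\<lambda>n. ln (Z n) / real n) \<longlonglongrightarrow> 0"
proof (rule ln_growth_tendsto_zero)
  have u_pos: "renewal kt n > 0" for n
    by (rule renewal_pos[of kt, OF kt k1])
  have ln_Z: "ln r + ln (renewal kt n) \<le> ln (Z n) \<and> ln (Z n) \<le> ln R + ln (renewal kt n)"
    if "n \<ge> 1" for n
  proof -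
    have "0 < r * renewal kt n" "0 < R * renewal kt n"
      using r R u_pos[of n] by simp_all
    moreover have "0 < Z n"
      using bnd[OF that] calculation by linarith
    ultimately have "ln (r * renewal kt n) \<le> ln (Z n) \<and> ln (Z n) \<le> ln (R * renewal kt n)"
      using bnd[OF that] by simp
    then show ?thesis
      using r R u_pos[of n] by (simp add: ln_mult)
  qed
  have "renewal kt n \<le> 1" for n
    by (rule renewal_le_one[OF kt]) (use ks in \<open>auto simp: sums_iff\<close>)
  then have u_le: "ln (renewal kt n) \<le> 0" for n
    using u_pos[of n] by simp
  show "eventually (\<lambda>n. ln (Z n) \<le> ln R) sequentially"
  proof (rule eventually_sequentiallyI[of 1])
    fix n :: nat assume "n \<ge> 1"
    then show "ln (Z n) \<le> ln R"
      using ln_Z[of n] u_le[of n] by linarith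
  qed
  fix \<epsilon> :: real assume e: "\<epsilon> > 0"
  have "eventually (\<lambda>n. - (\<epsilon> / 2) * n \<le> ln (renewal kt n)) sequentially"
    by (rule renewal_subexponential[OF kt k0 k1 ks]) (use e in simp)
  moreover have "eventually (\<lambda>n. n \<ge> nat \<lceil>2 * \<bar>ln r\<bar> / \<epsilon>\<rceil> + 1) sequentially"
    by (rule eventually_ge_at_top)
  ultimately show "eventually (\<lambda>n. - \<epsilon> * n \<le> ln (Z n)) sequentially"
  proof eventually_elim
    case (elim n)
    then have "2 * \<bar>ln r\<bar> / \<epsilon> \<le> n" by linarith
    then have "\<bar>ln r\<bar> \<le> \<epsilon> / 2 * n" using e by (simp add: field_simps)
    with elim ln_Z[of n] show ?case by linarith
  qed
qed

(* A sequence bounded below by the renewal sequence of a kernel of mass > 1 has positive growth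
   rate along the multiples of an index with u_n > 1. *)
lemma free_energy_not_zero_of_supercritical:
  fixes kt Z :: "nat \<Rightarrow> real" and r :: real
  assumes kt: "\<And>t. kt t \<ge> 0" and k0: "kt 0 = 0" and sk: "summable kt" and gt: "suminf kt > 1"
    and r: "r > 0" and bnd: "\<And>n. n \<ge> 1 \<Longrightarrow> r * renewal kt n \<le> Z n"
  shows "\<not> (\<lambda>n. ln (Z n) / real n) \<longlonglongrightarrow> 0"
proof
  assume lim: "(\<lambda>n. ln (Z n) / real n) \<longlonglongrightarrow> 0"
  obtain n0 where n0: "renewal kt n0 > 1"
    using renewal_exceeds_one[OF kt k0 sk gt] by blast
  then have n0_pos: "n0 > 0"
    by (cases n0) auto
  define c where "c = ln (renewal kt n0) / n0"
  have c: "c > 0"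
    using n0 n0_pos by (simp add: c_def)
  have "strict_mono (\<lambda>k. Suc k * n0)"
    using n0_pos by (intro strict_monoI) simp
  from LIMSEQ_subseq_LIMSEQ[OF lim this]
  have sub: "(\<lambda>k. ln (Z (Suc k * n0)) / real (Suc k * n0)) \<longlonglongrightarrow> 0"
    by (simp add: o_def)
  have lower: "ln r / n0 * inverse (Suc k) + c \<le> ln (Z (Suc k * n0)) / real (Suc k * n0)" for k
  proof -
    have "r * renewal kt n0 ^ Suc k \<le> r * renewal kt (Suc k * n0)"
      using r by (intro mult_left_mono renewal_power_le[of kt, OF kt]) auto
    also have "\<dots> \<le> Z (Suc k * n0)"
      using bnd n0_pos by simp
    finally have "ln (r * renewal kt n0 ^ Suc k) \<le> ln (Z (Suc k * n0))"
      by (rule ln_mono) (use r n0 in simp)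
    then have "ln r + Suc k * ln (renewal kt n0) \<le> ln (Z (Suc k * n0))"
      using r n0 by (simp add: ln_mult ln_realpow distrib_right)
    moreover have "ln r / n0 * inverse (Suc k) + c
        = (ln r + Suc k * ln (renewal kt n0)) / (real (Suc k) * real n0)"
      using n0_pos unfolding c_def by (simp add: field_simps del: of_nat_Suc)
    ultimately show ?thesis
      by (simp only: of_nat_mult divide_right_mono of_nat_0_le_iff mult_nonneg_nonneg)
  qed
  have "(\<lambda>k. ln r / n0 * inverse (Suc k) + c) \<longlonglongrightarrow> ln r / n0 * 0 + c"
    by (intro tendsto_intros LIMSEQ_inverse_real_of_nat)
  from LIMSEQ_le[OF this sub] lower have "c \<le> 0" by auto
  then show False using c by simp
qed

(* Coefficient of eps_j in  sum_(n in S) omega_n / beta. *)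
definition eps_coeff :: "real \<Rightarrow> real \<Rightarrow> nat set \<Rightarrow> nat \<Rightarrow> real" where
  "eps_coeff a0 a1 S j = a0 * (if j \<in> S then 1 else 0) + a1 * (if Suc j \<in> S then 1 else 0)"

lemma omega_sum_linear_form:
  assumes S: "S \<subseteq> {1..N}"
  shows "(\<Sum>n\<in>S. \<beta> * omega a0 a1 e n + h)
       = h * card S + (\<Sum>j\<le>N. \<beta> * eps_coeff a0 a1 S j * real_of_int (e j))"
proof -
  have own: "(\<Sum>j\<le>N. if j \<in> S then real_of_int (e j) else 0) = (\<Sum>n\<in>S. real_of_int (e n))"
    using S by (simp add: sum.inter_restrict[symmetric] Int_absorb1 subset_iff)
  have "(\<Sum>j\<le>N. if Suc j \<in> S then real_of_int (e j) else 0) = (\<Sum>j\<in>{j\<in>{..N}. Suc j \<in> S}. real_of_int (e j))"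
    by (rule sum.inter_filter[symmetric]) simp
  also have "\<dots> = (\<Sum>n\<in>S. real_of_int (e (n - 1)))"
    by (rule sum.reindex_bij_witness[of _ "\<lambda>n. n - 1" Suc]) (use S in \<open>auto simp: subset_iff\<close>)
  finally have prev: "(\<Sum>j\<le>N. if Suc j \<in> S then real_of_int (e j) else 0) = (\<Sum>n\<in>S. real_of_int (e (n - 1)))" .
  have "(\<Sum>j\<le>N. \<beta> * eps_coeff a0 a1 S j * real_of_int (e j))
      = \<beta> * a0 * (\<Sum>j\<le>N. if j \<in> S then real_of_int (e j) else 0)
        + \<beta> * a1 * (\<Sum>j\<le>N. if Suc j \<in> S then real_of_int (e j) else 0)"
    unfolding sum_distrib_left sum.distrib[symmetric]
    by (rule sum.cong) (auto simp: eps_coeff_def algebra_simps)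
  then show ?thesis
    unfolding own prev by (simp add: omega_def sum.distrib sum_distrib_left algebra_simps)
qed

lemma average_exp_linear_form:
  fixes c :: "nat \<Rightarrow> real"
  shows "(\<Sum>e\<in>PiE {..N} (\<lambda>_. {-1, 1::int}). exp (\<Sum>j\<le>N. c j * real_of_int (e j)))
       = 2 ^ (N + 1) * (\<Prod>j\<le>N. cosh (c j))"
proof -
  have "(\<Sum>e\<in>PiE {..N} (\<lambda>_. {-1, 1::int}). exp (\<Sum>j\<le>N. c j * real_of_int (e j)))
      = (\<Sum>e\<in>PiE {..N} (\<lambda>_. {-1, 1::int}). \<Prod>j\<le>N. exp (c j * real_of_int (e j)))"
    by (simp add: exp_sum)
  also have "\<dots> = (\<Prod>j\<le>N. \<Sum>y\<in>{-1, 1::int}. exp (c j * real_of_int y))"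
    by (rule prod_sum_PiE[symmetric]) auto
  also have "\<dots> = (\<Prod>j\<le>N. 2 * cosh (c j))"
    by (intro prod.cong refl) (simp add: cosh_def)
  finally show ?thesis
    by (simp add: prod.distrib)
qed

lemma disorder_average:
  assumes S: "S \<subseteq> {1..N}"
  shows "(\<Sum>e\<in>PiE {0..N} (\<lambda>_. {-1, 1::int}). exp (\<Sum>n\<in>S. \<beta> * omega a0 a1 e n + h)) / 2 ^ (N + 1)
       = exp (h * card S) * (\<Prod>j\<le>N. cosh (\<beta> * eps_coeff a0 a1 S j))"
  using average_exp_linear_form[where N=N and c="\<lambda>j. \<beta> * eps_coeff a0 a1 S j"]
  by (simp add: omega_sum_linear_form[OF S] exp_add sum_distrib_left[symmetric] atLeast0AtMost)

(* Possible values of  tau \<inter> {1..N}  on the event  N \<in> tau. *)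
definition renewal_sets :: "nat \<Rightarrow> nat set set" where
  "renewal_sets N = {S. S \<subseteq> {1..N} \<and> N \<in> S}"

definition cosh_prod :: "real \<Rightarrow> real \<Rightarrow> real \<Rightarrow> nat set \<Rightarrow> nat \<Rightarrow> real" where
  "cosh_prod a0 a1 \<beta> T M = (\<Prod>j\<le>M. cosh (\<beta> * eps_coeff a0 a1 T j))"

definition set_weight :: "(nat \<Rightarrow> real) \<Rightarrow> real \<Rightarrow> real \<Rightarrow> real \<Rightarrow> real \<Rightarrow> nat \<Rightarrow> nat set \<Rightarrow> real" where
  "set_weight K a0 a1 \<beta> h N S = renw K 0 (sorted_list_of_set S) * (exp (h * card S) * cosh_prod a0 a1 \<beta> S N)"

(* Disorder factor of a gap of length t between consecutive renewals: consecutive renewal epochs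
   share one sign (t = 1), distant ones do not. *)
definition gap_factor :: "real \<Rightarrow> real \<Rightarrow> real \<Rightarrow> nat \<Rightarrow> real" where
  "gap_factor a0 a1 \<beta> t = (if t = 1 then cosh (\<beta> * (a0 + a1)) else cosh (\<beta> * a0) * cosh (\<beta> * a1))"

lemma Zann_as_set_sum: "Zann K a0 a1 N \<beta> h = (\<Sum>S\<in>renewal_sets N. set_weight K a0 a1 \<beta> h N S)"
  unfolding Zann_def renewal_sets_def set_weight_def cosh_prod_def
  by (intro sum.cong refl) (subst disorder_average, auto)

lemma renw_snoc: "renw K p (xs @ [t]) = renw K p xs * K (t - last (p # xs))"
  by (induction xs arbitrary: p) auto

lemma sorted_list_insert_max:
  assumes "finite S" "\<forall>x\<in>S. x < N"
  shows "sorted_list_of_set (insert N S) = sorted_list_of_set S @ [(N::nat)]"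
proof -
  have nS: "N \<notin> S" using assms by auto
  have H: "sorted_wrt (<) (sorted_list_of_set S @ [N]) \<and> set (sorted_list_of_set S @ [N]) = insert N S
        \<and> length (sorted_list_of_set S @ [N]) = card (insert N S)"
    using assms nS by (auto simp: sorted_wrt_append)
  show ?thesis using H sorted_list_of_set_unique assms(1) finite_insert by metis
qed

(* Factors beyond the last renewal of T are cosh 0 = 1. *)
lemma cosh_prod_extend:
  assumes "T \<subseteq> {..M}" "M \<le> N"
  shows "cosh_prod a0 a1 \<beta> T N = cosh_prod a0 a1 \<beta> T M"
  unfolding cosh_prod_def
proof (rule prod.mono_neutral_right)
  show "\<forall>i\<in>{..N} - {..M}. cosh (\<beta> * eps_coeff a0 a1 T i) = 1"
    using assms by (auto simp: eps_coeff_def subset_iff)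
qed (use assms in auto)

lemma cosh_prod_insert:
  assumes S: "S \<subseteq> {1..m}" and m: "m \<in> S" and mN: "m < N"
  shows "cosh_prod a0 a1 \<beta> (insert N S) N = cosh_prod a0 a1 \<beta> S m * gap_factor a0 a1 \<beta> (N - m)"
proof -
  have "m \<ge> 1" using m S by auto
  then have N2: "N \<ge> 2" using mN by simp
  define n where "n = N - 2"
  have N: "N = Suc (Suc n)" using N2 by (simp add: n_def)
  have mn: "m \<le> Suc n" using mN N by simp
  have last_two: "cosh_prod a0 a1 \<beta> (insert N S) N = cosh_prod a0 a1 \<beta> (insert N S) n *
      cosh (\<beta> * eps_coeff a0 a1 (insert N S) (Suc n)) * cosh (\<beta> * eps_coeff a0 a1 (insert N S) N)"
    unfolding cosh_prod_def N by simp
  have prefix: "cosh_prod a0 a1 \<beta> (insert N S) n = cosh_prod a0 a1 \<beta> S n"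
    unfolding cosh_prod_def by (intro prod.cong refl) (auto simp: eps_coeff_def N)
  have extend: "cosh_prod a0 a1 \<beta> S m = cosh_prod a0 a1 \<beta> S (Suc n)"
    by (rule cosh_prod_extend[symmetric]) (use S mn in auto)
  have split_S: "cosh_prod a0 a1 \<beta> S (Suc n) = cosh_prod a0 a1 \<beta> S n * cosh (\<beta> * eps_coeff a0 a1 S (Suc n))"
    unfolding cosh_prod_def by simp
  have NS: "N \<notin> S" "Suc N \<notin> S" using S mN by auto
  show ?thesis
  proof (cases "m = Suc n")
    case True
    then have "N - m = 1" using N by simp
    then show ?thesis using last_two prefix extend split_S NS m True
      by (simp add: eps_coeff_def gap_factor_def N algebra_simps)
  next
    case False
    then have "Suc n \<notin> S" using S mn by auto
    moreover have "N - m \<noteq> 1" using False N mn by simp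
    ultimately show ?thesis using last_two prefix extend split_S NS
      by (simp add: eps_coeff_def gap_factor_def N algebra_simps)
  qed
qed

lemma renewal_sets_finite: "finite (renewal_sets m)"
  by (rule finite_subset[of _ "Pow {1..m}"]) (auto simp: renewal_sets_def)

lemma renewal_sets_mem:
  assumes "S \<in> renewal_sets m"
  shows "finite S" "m \<in> S" "S \<subseteq> {1..m}" "m \<ge> 1" "\<forall>x\<in>S - {m}. x < m"
proof -
  show "S \<subseteq> {1..m}" "m \<in> S" using assms by (auto simp: renewal_sets_def)
  then show "finite S" "m \<ge> 1" "\<forall>x\<in>S - {m}. x < m" using finite_subset[of S "{1..m}"] by auto
qed

lemma set_weight_insert:
  assumes S: "S \<in> renewal_sets m" and mN: "m < N"
  shows "set_weight K a0 a1 \<beta> h N (insert N S) =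
    set_weight K a0 a1 \<beta> h m S * (exp h * K (N - m) * gap_factor a0 a1 \<beta> (N - m))"
proof -
  note E = renewal_sets_mem[OF S]
  have Sm: "insert m (S - {m}) = S" using E by auto
  have "sorted_list_of_set (insert m (S - {m})) = sorted_list_of_set (S - {m}) @ [m]"
    by (rule sorted_list_insert_max) (use E in auto)
  then have sorted_S: "sorted_list_of_set S = sorted_list_of_set (S - {m}) @ [m]" by (simp only: Sm)
  have lt: "\<forall>x\<in>S. x < N" using E mN by auto
  have sorted_insert: "sorted_list_of_set (insert N S) = sorted_list_of_set S @ [N]"
    by (rule sorted_list_insert_max) (use E lt in auto)
  have renw_insert: "renw K 0 (sorted_list_of_set (insert N S)) = renw K 0 (sorted_list_of_set S) * K (N - m)"
    unfolding sorted_insert renw_snoc by (simp add: sorted_S)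
  have NS: "N \<notin> S" using lt by auto
  have card_insert: "card (insert N S) = Suc (card S)" using E NS by simp
  have cosh_insert: "cosh_prod a0 a1 \<beta> (insert N S) N = cosh_prod a0 a1 \<beta> S m * gap_factor a0 a1 \<beta> (N - m)"
    by (rule cosh_prod_insert) (use E mN in auto)
  show ?thesis unfolding set_weight_def renw_insert card_insert cosh_insert by (simp add: exp_add distrib_left algebra_simps)
qed

lemma set_weight_singleton:
  assumes N: "N \<ge> 1"
  shows "set_weight K a0 a1 \<beta> h N {N} = exp h * K N * (cosh (\<beta> * a0) * cosh (\<beta> * a1))"
proof -
  define n where "n = N - 1"
  have Nn: "N = Suc n" using N by (simp add: n_def)
  have last_factor: "cosh_prod a0 a1 \<beta> {N} N = cosh_prod a0 a1 \<beta> {N} n * cosh (\<beta> * a0)"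
    unfolding cosh_prod_def Nn by (simp add: eps_coeff_def)
  have first_factors: "cosh_prod a0 a1 \<beta> {N} n = cosh (\<beta> * a1)"
  proof (cases n)
    case 0 then show ?thesis unfolding cosh_prod_def by (simp add: eps_coeff_def Nn)
  next
    case (Suc n')
    have "cosh_prod a0 a1 \<beta> {N} n = (\<Prod>j\<le>n'. cosh (\<beta> * eps_coeff a0 a1 {N} j)) * cosh (\<beta> * eps_coeff a0 a1 {N} n)"
      unfolding cosh_prod_def Suc by simp
    also have "(\<Prod>j\<le>n'. cosh (\<beta> * eps_coeff a0 a1 {N} j)) = 1"
      by (rule prod.neutral) (auto simp: eps_coeff_def Nn Suc)
    finally show ?thesis by (simp add: eps_coeff_def Nn)
  qed
  show ?thesis unfolding set_weight_def last_factor first_factors by simp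
qed

lemma renewal_sets_decomp:
  assumes N: "N \<ge> 1"
  shows "renewal_sets N = insert {N} (\<Union>m\<in>{1..<N}. insert N ` renewal_sets m)"
proof (rule set_eqI iffI)+
  fix S assume S: "S \<in> renewal_sets N"
  show "S \<in> insert {N} (\<Union>m\<in>{1..<N}. insert N ` renewal_sets m)"
  proof (cases "S = {N}")
    case True then show ?thesis by simp
  next
    case False
    define S' where "S' = S - {N}"
    have fS: "finite S'" using renewal_sets_mem[OF S] by (simp add: S'_def)
    have ne: "S' \<noteq> {}" using False renewal_sets_mem[OF S] by (auto simp: S'_def)
    define m where "m = Max S'"
    have mS: "m \<in> S'" using fS ne by (simp add: m_def)
    have le: "\<forall>x\<in>S'. x \<le> m" using fS by (simp add: m_def)
    have sub: "S' \<subseteq> {1..N} - {N}" using renewal_sets_mem[OF S] by (auto simp: S'_def)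
    have m1: "m \<in> {1..<N}" using mS sub by auto
    have "S' \<in> renewal_sets m" using mS le sub by (auto simp: renewal_sets_def)
    moreover have "S = insert N S'" using renewal_sets_mem[OF S] by (auto simp: S'_def)
    ultimately show ?thesis using m1 by blast
  qed
next
  fix S assume "S \<in> insert {N} (\<Union>m\<in>{1..<N}. insert N ` renewal_sets m)"
  then show "S \<in> renewal_sets N" using N by (auto simp: renewal_sets_def)
qed

lemma sum_renewal_sets:
  fixes F :: "nat set \<Rightarrow> real"
  assumes N: "N \<ge> 1"
  shows "(\<Sum>S\<in>renewal_sets N. F S) = F {N} + (\<Sum>m\<in>{1..<N}. \<Sum>S\<in>renewal_sets m. F (insert N S))"
proof -
  have N_notin: "N \<notin> S" if "S \<in> renewal_sets m" "m \<in> {1..<N}" for S m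
    using renewal_sets_mem(3)[OF that(1)] that(2) by auto
  have inj: "inj_on (insert N) (renewal_sets m)" if "m \<in> {1..<N}" for m
    using N_notin[OF _ that] by (intro inj_onI) (metis insert_ident)
  have disj: "insert N ` renewal_sets i \<inter> insert N ` renewal_sets j = {}"
    if "i \<in> {1..<N}" "j \<in> {1..<N}" "i \<noteq> j" for i j
  proof (rule ccontr)
    assume "insert N ` renewal_sets i \<inter> insert N ` renewal_sets j \<noteq> {}"
    then obtain S T where ST: "S \<in> renewal_sets i" "T \<in> renewal_sets j" "insert N S = insert N T"
      by auto
    then have "S = T"
      using N_notin that by (metis insert_ident)
    then show False
      using renewal_sets_mem(2,3)[OF ST(1)] renewal_sets_mem(2,3)[OF ST(2)] that(3) by force
  qed
  have single_new: "{N} \<notin> (\<Union>m\<in>{1..<N}. insert N ` renewal_sets m)"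
    using renewal_sets_mem(2) N_notin by blast
  have "(\<Sum>S\<in>renewal_sets N. F S) = F {N} + (\<Sum>S\<in>(\<Union>m\<in>{1..<N}. insert N ` renewal_sets m). F S)"
    unfolding renewal_sets_decomp[OF N] by (intro sum.insert single_new) (auto intro: renewal_sets_finite)
  also have "(\<Sum>S\<in>(\<Union>m\<in>{1..<N}. insert N ` renewal_sets m). F S)
      = (\<Sum>m\<in>{1..<N}. \<Sum>S\<in>insert N ` renewal_sets m. F S)"
    using disj by (intro sum.UNION_disjoint) (auto intro: renewal_sets_finite)
  also have "\<dots> = (\<Sum>m\<in>{1..<N}. \<Sum>S\<in>renewal_sets m. F (insert N S))"
    by (rule sum.cong[OF refl]) (simp add: sum.reindex inj o_def)
  finally show ?thesis .
qed

lemma Zann_renewal_equation: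
  assumes N: "N \<ge> 1"
  shows "Zann K a0 a1 N \<beta> h = exp h * K N * (cosh (\<beta> * a0) * cosh (\<beta> * a1))
     + (\<Sum>m\<in>{1..<N}. exp h * K (N - m) * gap_factor a0 a1 \<beta> (N - m) * Zann K a0 a1 m \<beta> h)"
proof -
  let ?W = "set_weight K a0 a1 \<beta> h"
  have "Zann K a0 a1 N \<beta> h = ?W N {N} + (\<Sum>m\<in>{1..<N}. \<Sum>S\<in>renewal_sets m. ?W N (insert N S))"
    unfolding Zann_as_set_sum by (rule sum_renewal_sets[OF N])
  also have "\<dots> = ?W N {N} + (\<Sum>m\<in>{1..<N}. \<Sum>S\<in>renewal_sets m.
      ?W m S * (exp h * K (N - m) * gap_factor a0 a1 \<beta> (N - m)))"
    by (intro arg_cong2[where f = "(+)"] sum.cong refl) (simp add: set_weight_insert)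
  finally show ?thesis
    by (simp add: set_weight_singleton[OF N] Zann_as_set_sum sum_distrib_right mult.commute)
qed

lemma renewal_comparison:
  fixes kt Z a :: "nat \<Rightarrow> real" and r R :: real
  assumes kt: "\<And>t. kt t \<ge> 0" and r: "r \<le> 1" and R: "1 \<le> R"
    and rec: "\<And>n. n \<ge> 1 \<Longrightarrow> Z n = a n + (\<Sum>m\<in>{1..<n}. kt (n - m) * Z m)"
    and first: "\<And>n. n \<ge> 1 \<Longrightarrow> r * kt n \<le> a n \<and> a n \<le> R * kt n"
  shows "n \<ge> 1 \<Longrightarrow> r * renewal kt n \<le> Z n \<and> Z n \<le> R * renewal kt n"
proof (induction n rule: less_induct)
  case (less n)
  have "{..<n} = insert 0 {1..<n}"
    using less.prems by auto
  then have u: "renewal kt n = kt n + (\<Sum>m\<in>{1..<n}. kt (n - m) * renewal kt m)"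
    using less.prems by (simp add: renewal_eq mult.commute)
  have "r * (kt (n - m) * renewal kt m) \<le> kt (n - m) * Z m \<and> kt (n - m) * Z m \<le> R * (kt (n - m) * renewal kt m)"
    if "m \<in> {1..<n}" for m
  proof -
    have "r * renewal kt m \<le> Z m" "Z m \<le> R * renewal kt m"
      using less.IH[of m] that by auto
    from mult_left_mono[OF this(1) kt[of "n - m"]] mult_left_mono[OF this(2) kt[of "n - m"]]
    show ?thesis
      by (simp add: mult_ac)
  qed
  then have "r * (\<Sum>m\<in>{1..<n}. kt (n - m) * renewal kt m) \<le> (\<Sum>m\<in>{1..<n}. kt (n - m) * Z m)
      \<and> (\<Sum>m\<in>{1..<n}. kt (n - m) * Z m) \<le> R * (\<Sum>m\<in>{1..<n}. kt (n - m) * renewal kt m)"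
    unfolding sum_distrib_left by (auto intro: sum_mono)
  then show ?case
    unfolding rec[OF less.prems] u using first[OF less.prems] by (simp add: distrib_left)
qed

lemma sums_first_corrected:
  fixes K :: "nat \<Rightarrow> real" and c d :: real
  assumes Ksum: "(\<lambda>n. K (Suc n)) sums 1"
  shows "(\<lambda>t. c * K (Suc t) + (if t = 0 then d else 0)) sums (c + d)"
  using sums_add[OF sums_mult[OF Ksum, of c] sums_single[of 0 "\<lambda>_. d"]] by simp

lemma K1_bounds:
  fixes K :: "nat \<Rightarrow> real"
  assumes Kpos: "\<And>n. n \<ge> 1 \<Longrightarrow> K n > 0" and Ksum: "(\<lambda>n. K (Suc n)) sums 1"
  shows "0 < K 1" "K 1 \<le> 1"
proof -
  show "0 < K 1" using Kpos by simp
  have "(\<Sum>i<1. K (Suc i)) \<le> (\<Sum>i. K (Suc i))"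
    by (intro sum_le_suminf) (use Ksum Kpos in \<open>auto simp: sums_iff less_imp_le\<close>)
  then show "K 1 \<le> 1" using Ksum by (simp add: sums_iff)
qed

definition eff_kernel :: "(nat \<Rightarrow> real) \<Rightarrow> real \<Rightarrow> real \<Rightarrow> real \<Rightarrow> real \<Rightarrow> nat \<Rightarrow> real" where
  "eff_kernel K a0 a1 \<beta> h t = (if t = 0 then 0 else exp h * K t * gap_factor a0 a1 \<beta> t)"

lemma eff_kernel_nonneg:
  assumes "\<And>n. n \<ge> 1 \<Longrightarrow> K n > 0"
  shows "eff_kernel K a0 a1 \<beta> h t \<ge> 0"
  using assms[of t] by (auto simp: eff_kernel_def gap_factor_def less_imp_le)

(* Zann is comparable with the renewal sequence of the effective kernel; the only discrepancy,
   in the term without intermediate renewals, is the ratio rho of the two gap factors. *)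
lemma Zann_comparable_renewal:
  fixes K :: "nat \<Rightarrow> real" and a0 a1 \<beta> h :: real
  assumes Kpos: "\<And>n. n \<ge> 1 \<Longrightarrow> K n > 0" and n: "n \<ge> 1"
  defines "\<rho> \<equiv> cosh (\<beta> * a0) * cosh (\<beta> * a1) / cosh (\<beta> * (a0 + a1))"
  shows "min 1 \<rho> * renewal (eff_kernel K a0 a1 \<beta> h) n \<le> Zann K a0 a1 n \<beta> h
      \<and> Zann K a0 a1 n \<beta> h \<le> max 1 \<rho> * renewal (eff_kernel K a0 a1 \<beta> h) n"
proof (rule renewal_comparison[OF eff_kernel_nonneg[OF Kpos] _ _ _ _ n])
  fix n :: nat assume n: "n \<ge> 1"
  show "Zann K a0 a1 n \<beta> h = exp h * K n * (cosh (\<beta> * a0) * cosh (\<beta> * a1))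
      + (\<Sum>m\<in>{1..<n}. eff_kernel K a0 a1 \<beta> h (n - m) * Zann K a0 a1 m \<beta> h)"
    unfolding Zann_renewal_equation[OF n]
    by (intro arg_cong2[where f = "(+)"] refl sum.cong) (auto simp: eff_kernel_def)
  have k: "eff_kernel K a0 a1 \<beta> h n \<ge> 0"
    by (rule eff_kernel_nonneg[OF Kpos])
  have "exp h * K n * (cosh (\<beta> * a0) * cosh (\<beta> * a1))
      = (if n = 1 then \<rho> else 1) * eff_kernel K a0 a1 \<beta> h n"
    using n by (simp add: eff_kernel_def gap_factor_def \<rho>_def)
  then show "min 1 \<rho> * eff_kernel K a0 a1 \<beta> h n \<le> exp h * K n * (cosh (\<beta> * a0) * cosh (\<beta> * a1))
      \<and> exp h * K n * (cosh (\<beta> * a0) * cosh (\<beta> * a1)) \<le> max 1 \<rho> * eff_kernel K a0 a1 \<beta> h n"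
    using mult_right_mono[OF min.cobounded1[of 1 \<rho>] k] mult_right_mono[OF min.cobounded2[of 1 \<rho>] k]
      mult_right_mono[OF max.cobounded1[of 1 \<rho>] k] mult_right_mono[OF max.cobounded2[of 1 \<rho>] k]
    by auto
qed auto

lemma eff_kernel_sums:
  fixes K :: "nat \<Rightarrow> real" and a0 a1 \<beta> h :: real
  assumes Ksum: "(\<lambda>n. K (Suc n)) sums 1"
  shows "eff_kernel K a0 a1 \<beta> h sums
    (exp h * (K 1 * cosh (\<beta> * (a0 + a1)) + (1 - K 1) * (cosh (\<beta> * a0) * cosh (\<beta> * a1))))"
proof -
  let ?C1 = "cosh (\<beta> * (a0 + a1))" and ?C2 = "cosh (\<beta> * a0) * cosh (\<beta> * a1)"
  have shift: "(\<lambda>t. eff_kernel K a0 a1 \<beta> h (Suc t))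
      = (\<lambda>t. exp h * ?C2 * K (Suc t) + (if t = 0 then exp h * K 1 * (?C1 - ?C2) else 0))"
    by (rule ext) (auto simp: eff_kernel_def gap_factor_def algebra_simps)
  have total: "exp h * ?C2 + exp h * K 1 * (?C1 - ?C2) = exp h * (K 1 * ?C1 + (1 - K 1) * ?C2)"
    by (simp add: algebra_simps)
  have "(\<lambda>t. eff_kernel K a0 a1 \<beta> h (Suc t)) sums (exp h * (K 1 * ?C1 + (1 - K 1) * ?C2))"
    unfolding shift total[symmetric] by (rule sums_first_corrected[OF Ksum])
  moreover have "eff_kernel K a0 a1 \<beta> h 0 = 0"
    by (simp add: eff_kernel_def)
  ultimately show ?thesis
    using sums_Suc by fastforce
qed

(* The value  lambda(beta) = K(1) cosh(beta (a0 + a1)) + (1 - K(1)) cosh(beta a0) cosh(beta a1),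
   so that the effective kernel has mass  e^h lambda(beta). *)
definition lambda_value :: "(nat \<Rightarrow> real) \<Rightarrow> real \<Rightarrow> real \<Rightarrow> real \<Rightarrow> real" where
  "lambda_value K a0 a1 \<beta> = K 1 * cosh (\<beta> * (a0 + a1)) + (1 - K 1) * (cosh (\<beta> * a0) * cosh (\<beta> * a1))"

lemma lambda_value_pos:
  assumes Kpos: "\<And>n. n \<ge> 1 \<Longrightarrow> K n > 0" and Ksum: "(\<lambda>n. K (Suc n)) sums 1"
  shows "lambda_value K a0 a1 \<beta> > 0"
  using K1_bounds[OF Kpos Ksum] unfolding lambda_value_def
  by (intro add_pos_nonneg mult_pos_pos mult_nonneg_nonneg) auto

lemma Zann_renewal_facts:
  fixes K :: "nat \<Rightarrow> real" and a0 a1 \<beta> h :: real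
  assumes Kpos: "\<And>n. n \<ge> 1 \<Longrightarrow> K n > 0" and Ksum: "(\<lambda>n. K (Suc n)) sums 1"
  defines "kt \<equiv> eff_kernel K a0 a1 \<beta> h"
    and "\<rho> \<equiv> cosh (\<beta> * a0) * cosh (\<beta> * a1) / cosh (\<beta> * (a0 + a1))"
  shows "\<And>t. kt t \<ge> 0" "kt 0 = 0" "kt 1 > 0" "kt sums (exp h * lambda_value K a0 a1 \<beta>)"
    "\<And>n. n \<ge> 1 \<Longrightarrow> min 1 \<rho> * renewal kt n \<le> Zann K a0 a1 n \<beta> h
        \<and> Zann K a0 a1 n \<beta> h \<le> max 1 \<rho> * renewal kt n"
proof -
  show "\<And>t. kt t \<ge> 0"
    unfolding kt_def by (rule eff_kernel_nonneg[OF Kpos])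
  show "kt 0 = 0"
    by (simp add: kt_def eff_kernel_def)
  show "kt 1 > 0"
    using Kpos[of 1] by (simp add: kt_def eff_kernel_def gap_factor_def)
  show "kt sums (exp h * lambda_value K a0 a1 \<beta>)"
    unfolding kt_def lambda_value_def by (rule eff_kernel_sums[OF Ksum])
  show "\<And>n. n \<ge> 1 \<Longrightarrow> min 1 \<rho> * renewal kt n \<le> Zann K a0 a1 n \<beta> h
        \<and> Zann K a0 a1 n \<beta> h \<le> max 1 \<rho> * renewal kt n"
    unfolding kt_def \<rho>_def by (rule Zann_comparable_renewal[OF Kpos])
qed

(* At h = - ln lambda the effective kernel is a probability, so the free energy vanishes. *)
lemma critical_free_energy_zero:
  fixes K :: "nat \<Rightarrow> real" and a0 a1 \<beta> :: real
  assumes Kpos: "\<And>n. n \<ge> 1 \<Longrightarrow> K n > 0" and Ksum: "(\<lambda>n. K (Suc n)) sums 1"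
  defines "hc \<equiv> - ln (lambda_value K a0 a1 \<beta>)"
  shows "(\<lambda>N. ln (Zann K a0 a1 N \<beta> hc) / real N) \<longlonglongrightarrow> 0"
proof -
  note facts = Zann_renewal_facts[where ?a0.0 = a0 and ?a1.0 = a1 and \<beta> = \<beta> and h = hc, OF Kpos Ksum]
  have "exp hc * lambda_value K a0 a1 \<beta> = 1"
    using lambda_value_pos[OF Kpos Ksum, of a0 a1 \<beta>] by (simp add: hc_def exp_minus field_simps)
  then show ?thesis
    using free_energy_zero_of_comparable[OF facts(1-3) _ _ _ facts(5)] facts(4) by simp
qed

(* Above - ln lambda the effective kernel has mass > 1, so the free energy is positive. *)
lemma free_energy_zero_imp_le_critical:
  fixes K :: "nat \<Rightarrow> real" and a0 a1 \<beta> h :: real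
  assumes Kpos: "\<And>n. n \<ge> 1 \<Longrightarrow> K n > 0" and Ksum: "(\<lambda>n. K (Suc n)) sums 1"
    and zero: "(\<lambda>N. ln (Zann K a0 a1 N \<beta> h) / real N) \<longlonglongrightarrow> 0"
  shows "h \<le> - ln (lambda_value K a0 a1 \<beta>)"
proof (rule ccontr)
  assume "\<not> ?thesis"
  then have "exp (- ln (lambda_value K a0 a1 \<beta>)) < exp h"
    by simp
  then have "1 < exp h * lambda_value K a0 a1 \<beta>"
    using lambda_value_pos[OF Kpos Ksum, of a0 a1 \<beta>] by (simp add: exp_minus field_simps)
  note facts = Zann_renewal_facts[where ?a0.0 = a0 and ?a1.0 = a1 and \<beta> = \<beta> and h = h, OF Kpos Ksum]
  show False
    using free_energy_not_zero_of_supercritical[OF facts(1,2) _ _ _ conjunct1[OF facts(5)]]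
      facts(4) \<open>1 < _\<close> zero by (auto simp: sums_iff)
qed

lemma hca_eq:
  fixes K :: "nat \<Rightarrow> real" and a0 a1 \<beta> :: real
  assumes Kpos: "\<And>n. n \<ge> 1 \<Longrightarrow> K n > 0" and Ksum: "(\<lambda>n. K (Suc n)) sums 1"
  shows "hca K a0 a1 \<beta> = - ln (lambda_value K a0 a1 \<beta>)"
  unfolding hca_def
  using critical_free_energy_zero[OF Kpos Ksum] free_energy_zero_imp_le_critical[OF Kpos Ksum]
  by (intro cSup_eq_maximum) auto

lemma Sig_pair: "r \<in> {-1, 1} \<Longrightarrow> t \<in> {-1, 1} \<Longrightarrow> (r, t) \<in> Sig"
  unfolding Sig_def by blast

lemma sum_Sig: "(\<Sum>y\<in>Sig. F y) = (\<Sum>r\<in>{-1, 1::int}. \<Sum>t\<in>{-1, 1::int}. F (r, t))"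
  unfolding Sig_def sum.cartesian_product by simp

(* A matrix of product form  B x y = phi(y1) G(x1, y0)  has the eigenvector  x -> sum_r G(x1, r),
   with eigenvalue  sum_(t,r) phi(t) G(t, r). *)
lemma eigenvector_product_form:
  fixes B :: "int \<times> int \<Rightarrow> int \<times> int \<Rightarrow> real" and \<phi> :: "int \<Rightarrow> real" and G :: "int \<Rightarrow> int \<Rightarrow> real"
  assumes form: "\<And>x y. x \<in> Sig \<Longrightarrow> y \<in> Sig \<Longrightarrow> B x y = \<phi> (snd y) * G (snd x) (fst y)"
    and g_nz: "\<exists>s\<in>{-1, 1}. (\<Sum>r\<in>{-1, 1}. G s r) \<noteq> 0"
  shows "is_eigenvalue B (\<Sum>t\<in>{-1, 1}. \<Sum>r\<in>{-1, 1}. \<phi> t * G t r)"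
proof -
  define g where "g s = (\<Sum>r\<in>{-1, 1::int}. G s r)" for s
  define \<Lambda> where "\<Lambda> = (\<Sum>t\<in>{-1, 1::int}. \<Sum>r\<in>{-1, 1::int}. \<phi> t * G t r)"
  have \<Lambda>: "\<Lambda> = (\<Sum>t\<in>{-1, 1::int}. \<phi> t * g t)"
    unfolding \<Lambda>_def g_def by (simp only: sum_distrib_left)
  have "(\<Sum>y\<in>Sig. B x y * g (snd y)) = g (snd x) * \<Lambda>" if x: "x \<in> Sig" for x
  proof -
    have "(\<Sum>y\<in>Sig. B x y * g (snd y)) = (\<Sum>r\<in>{-1, 1}. \<Sum>t\<in>{-1, 1}. G (snd x) r * (\<phi> t * g t))"
      unfolding sum_Sig
    proof (intro sum.cong refl)
      fix r t :: int assume "r \<in> {-1, 1}" "t \<in> {-1, 1}"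
      then show "B x (r, t) * g (snd (r, t)) = G (snd x) r * (\<phi> t * g t)"
        using form[OF x Sig_pair] by simp
    qed
    also have "\<dots> = g (snd x) * \<Lambda>"
      by (simp only: \<Lambda> g_def sum_product)
    finally show ?thesis .
  qed
  then have "(\<Sum>y\<in>Sig. complex_of_real (B x y) * of_real (g (snd y))) = of_real \<Lambda> * of_real (g (snd x))"
    if "x \<in> Sig" for x
  proof -
    have "(\<Sum>y\<in>Sig. complex_of_real (B x y) * of_real (g (snd y))) = of_real (\<Sum>y\<in>Sig. B x y * g (snd y))"
      by simp
    also have "\<dots> = of_real \<Lambda> * of_real (g (snd x))"
      using that \<open>\<And>x. x \<in> Sig \<Longrightarrow> _\<close> by (simp add: mult.commute)
    finally show ?thesis .
  qed
  moreover obtain s where s: "s \<in> {-1, 1}" and "g s \<noteq> 0"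
    using g_nz unfolding g_def by blast
  then have "(s, s) \<in> Sig" "complex_of_real (g (snd (s, s))) \<noteq> 0"
    using Sig_pair[OF s s] by simp_all
  ultimately show ?thesis
    unfolding is_eigenvalue_def \<Lambda>_def[symmetric]
    by (intro exI[of _ "\<lambda>x. complex_of_real (g (snd x))"] conjI bexI[of _ "(s, s)"] ballI) auto
qed

definition row_average :: "(int \<Rightarrow> real) \<Rightarrow> (int \<times> int \<Rightarrow> complex) \<Rightarrow> int \<Rightarrow> complex" where
  "row_average \<phi> v r = (\<Sum>t\<in>{-1, 1}. complex_of_real (\<phi> t) * v (r, t))"

lemma eigen_equation_product_form:
  fixes B :: "int \<times> int \<Rightarrow> int \<times> int \<Rightarrow> real" and \<phi> :: "int \<Rightarrow> real" and G :: "int \<Rightarrow> int \<Rightarrow> real"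
  assumes form: "\<And>x y. x \<in> Sig \<Longrightarrow> y \<in> Sig \<Longrightarrow> B x y = \<phi> (snd y) * G (snd x) (fst y)"
    and eq: "\<And>x. x \<in> Sig \<Longrightarrow> (\<Sum>y\<in>Sig. complex_of_real (B x y) * v y) = \<mu> * v x"
    and st: "(s, t) \<in> Sig"
  shows "\<mu> * v (s, t) = (\<Sum>r\<in>{-1, 1}. complex_of_real (G t r) * row_average \<phi> v r)"
proof -
  have "\<mu> * v (s, t) = (\<Sum>y\<in>Sig. complex_of_real (B (s, t) y) * v y)"
    by (rule eq[OF st, symmetric])
  also have "\<dots> = (\<Sum>r\<in>{-1, 1}. \<Sum>t'\<in>{-1, 1}. complex_of_real (G t r) * (complex_of_real (\<phi> t') * v (r, t')))"
    unfolding sum_Sig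
  proof (intro sum.cong refl)
    fix r t' :: int assume "r \<in> {-1, 1}" "t' \<in> {-1, 1}"
    then show "complex_of_real (B (s, t) (r, t')) * v (r, t')
        = complex_of_real (G t r) * (complex_of_real (\<phi> t') * v (r, t'))"
      using form[OF st Sig_pair] by simp
  qed
  finally show ?thesis
    by (simp only: row_average_def sum_distrib_left)
qed

(* Applying the eigenvalue equation twice: mu times a row average is independent of the row. *)
lemma row_average_equation:
  fixes \<phi> :: "int \<Rightarrow> real" and G :: "int \<Rightarrow> int \<Rightarrow> real"
  assumes row: "\<And>s t. (s, t) \<in> Sig \<Longrightarrow>
      \<mu> * v (s, t) = (\<Sum>r\<in>{-1, 1}. complex_of_real (G t r) * row_average \<phi> v r)"
    and r: "r \<in> {-1, 1}"
  shows "\<mu> * row_average \<phi> v r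
    = (\<Sum>t\<in>{-1, 1::int}. \<Sum>r'\<in>{-1, 1::int}. complex_of_real (\<phi> t * G t r') * row_average \<phi> v r')"
proof -
  have "\<mu> * row_average \<phi> v r = (\<Sum>t\<in>{-1, 1}. complex_of_real (\<phi> t) * (\<mu> * v (r, t)))"
    unfolding row_average_def sum_distrib_left by (intro sum.cong refl) (simp add: mult_ac)
  also have "\<dots> = (\<Sum>t\<in>{-1, 1::int}. \<Sum>r'\<in>{-1, 1::int}. complex_of_real (\<phi> t * G t r') * row_average \<phi> v r')"
  proof (intro sum.cong refl)
    fix t :: int assume "t \<in> {-1, 1}"
    then show "complex_of_real (\<phi> t) * (\<mu> * v (r, t))
        = (\<Sum>r'\<in>{-1, 1}. complex_of_real (\<phi> t * G t r') * row_average \<phi> v r')"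
      using row[OF Sig_pair[OF r]] by (simp add: distrib_left mult_ac)
  qed
  finally show ?thesis .
qed

lemma eigenvalues_product_form:
  fixes B :: "int \<times> int \<Rightarrow> int \<times> int \<Rightarrow> real" and \<phi> :: "int \<Rightarrow> real" and G :: "int \<Rightarrow> int \<Rightarrow> real"
  assumes form: "\<And>x y. x \<in> Sig \<Longrightarrow> y \<in> Sig \<Longrightarrow> B x y = \<phi> (snd y) * G (snd x) (fst y)"
    and ev: "is_eigenvalue B \<mu>"
  shows "\<mu> = 0 \<or> \<mu> = of_real (\<Sum>t\<in>{-1, 1}. \<Sum>r\<in>{-1, 1}. \<phi> t * G t r)"
proof (cases "\<mu> = 0")
  case False
  obtain v where nz: "\<exists>x\<in>Sig. v x \<noteq> 0"
    and eq: "\<And>x. x \<in> Sig \<Longrightarrow> (\<Sum>y\<in>Sig. complex_of_real (B x y) * v y) = \<mu> * v x"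
    using ev unfolding is_eigenvalue_def by blast
  let ?W = "row_average \<phi> v"
  have row: "\<mu> * v (s, t) = (\<Sum>r\<in>{-1, 1}. complex_of_real (G t r) * ?W r)" if "(s, t) \<in> Sig" for s t
    by (rule eigen_equation_product_form[OF form eq]) (simp_all add: that)
  define c where "c = (\<Sum>t\<in>{-1, 1::int}. \<Sum>r\<in>{-1, 1::int}. complex_of_real (\<phi> t * G t r) * ?W r)"
  have \<mu>W: "\<mu> * ?W r = c" if "r \<in> {-1, 1}" for r
    unfolding c_def by (rule row_average_equation[OF row that])
  define w where "w = c / \<mu>"
  have W: "?W r = w" if "r \<in> {-1, 1}" for r
    using \<mu>W[OF that] False by (simp add: w_def field_simps)
  \<comment> \<open>A vanishing common row average would force \<open>v = 0\<close>.\<close>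
  have "w \<noteq> 0"
  proof
    assume w0: "w = 0"
    have "v x = 0" if x: "x \<in> Sig" for x
    proof -
      obtain s t where st: "x = (s, t)"
        by fastforce
      have "\<mu> * v x = (\<Sum>r\<in>{-1, 1}. complex_of_real (G t r) * ?W r)"
        using row x by (simp add: st)
      also have "\<dots> = 0"
        by (intro sum.neutral ballI) (simp add: W w0)
      finally show ?thesis
        using False by simp
    qed
    then show False
      using nz by blast
  qed
  moreover have "c = of_real (\<Sum>t\<in>{-1, 1}. \<Sum>r\<in>{-1, 1}. \<phi> t * G t r) * w"
  proof -
    have "c = (\<Sum>t\<in>{-1, 1::int}. \<Sum>r\<in>{-1, 1::int}. complex_of_real (\<phi> t * G t r) * w)"
      unfolding c_def by (intro sum.cong refl) (simp add: W)
    then show ?thesis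
      by (simp add: distrib_right)
  qed
  ultimately show ?thesis
    using \<mu>W[of 1] W[of 1] by simp
qed simp

lemma pf_eigenvalue_product_form:
  fixes B :: "int \<times> int \<Rightarrow> int \<times> int \<Rightarrow> real" and \<phi> :: "int \<Rightarrow> real" and G :: "int \<Rightarrow> int \<Rightarrow> real"
  assumes form: "\<And>x y. x \<in> Sig \<Longrightarrow> y \<in> Sig \<Longrightarrow> B x y = \<phi> (snd y) * G (snd x) (fst y)"
    and g_nz: "\<exists>s\<in>{-1,1}. (\<Sum>r\<in>{-1,1}. G s r) \<noteq> 0"
    and nonneg: "(\<Sum>t\<in>{-1,1}. \<Sum>r\<in>{-1,1}. \<phi> t * G t r) \<ge> 0"
  shows "pf_eigenvalue B (\<Sum>t\<in>{-1,1}. \<Sum>r\<in>{-1,1}. \<phi> t * G t r)"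
proof -
  define \<Lambda> where "\<Lambda> = (\<Sum>t\<in>{-1,1::int}. \<Sum>r\<in>{-1,1::int}. \<phi> t * G t r)"
  have "cmod \<mu> \<le> \<Lambda>" if "is_eigenvalue B \<mu>" for \<mu>
    using eigenvalues_product_form[OF form that, folded \<Lambda>_def] nonneg[folded \<Lambda>_def] by auto
  with eigenvector_product_form[OF form g_nz, folded \<Lambda>_def] show ?thesis
    unfolding pf_eigenvalue_def \<Lambda>_def[symmetric] by blast
qed

lemma finite_Sig: "finite Sig"
  by (simp add: Sig_def)

lemma half_delta_sum:
  fixes a :: int
  assumes "a \<in> {-1, 1}"
  shows "(\<Sum>s\<in>{-1, 1::int}. if a = s then 1 / 2 else 0) = (1 / 2 :: real)"
  using assms by (subst sum.delta') simp_all

(* Each state has exactly two predecessors, reached with probability 1/2. *)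
lemma Qm_column_sum:
  assumes "y \<in> Sig"
  shows "(\<Sum>z\<in>Sig. Qm z y) = 1"
proof -
  have "fst y \<in> {-1, 1}"
    using assms unfolding Sig_def by auto
  have "(\<Sum>z\<in>Sig. Qm z y) = (\<Sum>r\<in>{-1, 1::int}. \<Sum>s\<in>{-1, 1::int}. if fst y = s then 1 / 2 else 0)"
    unfolding sum_Sig Qm_def by (simp only: snd_conv)
  also have "\<dots> = (\<Sum>r\<in>{-1, 1::int}. 1 / 2)"
    by (simp only: half_delta_sum[OF \<open>fst y \<in> {-1, 1}\<close>])
  finally show ?thesis by simp
qed

lemma Qm_two_step:
  assumes "x \<in> Sig" "y \<in> Sig"
  shows "(\<Sum>z\<in>Sig. Qm x z * Qm z y) = 1 / 4"
proof -
  have sx: "snd x \<in> {-1, 1}" and fy: "fst y \<in> {-1, 1}"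
    using assms unfolding Sig_def by auto
  have "(\<Sum>z\<in>Sig. Qm x z * Qm z y)
      = (\<Sum>r\<in>{-1, 1::int}. \<Sum>s\<in>{-1, 1::int}. (if snd x = r then 1 / 2 else 0) * (if fst y = s then 1 / 2 else 0))"
    unfolding sum_Sig Qm_def by (simp only: fst_conv snd_conv eq_commute[of r "snd x" for r])
  also have "\<dots> = (\<Sum>r\<in>{-1, 1::int}. if snd x = r then 1 / 2 else 0) * (\<Sum>s\<in>{-1, 1::int}. if fst y = s then 1 / 2 else 0)"
    by (rule sum_product[symmetric])
  also have "\<dots> = 1 / 4"
    by (simp only: half_delta_sum[OF sx] half_delta_sum[OF fy])
  finally show ?thesis .
qed

lemma Qm_power:
  assumes x: "x \<in> Sig" and y: "y \<in> Sig"
  shows "matpow Qm (Suc t) x y = (if t = 0 then Qm x y else 1 / 4)"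
  using y
proof (induction t arbitrary: y)
  case 0
  have "matpow Qm (Suc 0) x y = (\<Sum>z\<in>Sig. if x = z then Qm z y else 0)"
    by (simp del: sum.delta) (intro sum.cong refl, simp)
  also have "\<dots> = Qm x y"
    using x by (simp add: sum.delta' finite_Sig)
  finally show ?case by simp
next
  case (Suc t)
  have "matpow Qm (Suc (Suc t)) x y = (\<Sum>z\<in>Sig. (if t = 0 then Qm x z else 1 / 4) * Qm z y)"
    by (subst matpow.simps(2)) (rule sum.cong[OF refl], simp only: Suc.IH)
  also have "\<dots> = 1 / 4"
    using Qm_two_step[OF x Suc.prems] Qm_column_sum[OF Suc.prems]
    by (cases "t = 0") (simp_all add: sum_distrib_left[symmetric] sum_divide_distrib[symmetric])
  finally show ?case by simp
qed

(* The factor  G(x1, y0)  of  A(0,beta,0)(x,y) = e^(beta a0 y1) G(x1, y0). *)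
definition pair_weight :: "(nat \<Rightarrow> real) \<Rightarrow> real \<Rightarrow> real \<Rightarrow> int \<Rightarrow> int \<Rightarrow> real" where
  "pair_weight K a1 \<beta> s r =
     exp (\<beta> * a1 * r) * (if r = s then K 1 / 2 + (1 - K 1) / 4 else (1 - K 1) / 4)"

(* The entries of A(0,beta,0), using that Q^t is uniform for t >= 2. *)
lemma Amat_entry:
  fixes K :: "nat \<Rightarrow> real" and a0 a1 \<beta> :: real
  assumes Ksum: "(\<lambda>n. K (Suc n)) sums 1" and x: "x \<in> Sig" and y: "y \<in> Sig"
  shows "Amat K a0 a1 \<beta> 0 x y = exp (\<beta> * a0 * snd y) * pair_weight K a1 \<beta> (snd x) (fst y)"
proof -
  let ?W = "exp (\<beta> * fobs a0 a1 y)"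
  have "(\<lambda>t. Mmat K a0 a1 (Suc t) \<beta> 0 x y)
      = (\<lambda>t. ?W / 4 * K (Suc t) + (if t = 0 then ?W * K 1 * (Qm x y - 1 / 4) else 0))"
    by (rule ext) (auto simp: Mmat_def Qm_power[OF x y] algebra_simps simp del: matpow.simps(2))
  then have "(\<lambda>t. Mmat K a0 a1 (Suc t) \<beta> 0 x y) sums (?W / 4 + ?W * K 1 * (Qm x y - 1 / 4))"
    by (simp only: sums_first_corrected[OF Ksum])
  then have "Amat K a0 a1 \<beta> 0 x y = ?W / 4 + ?W * K 1 * (Qm x y - 1 / 4)"
    unfolding Amat_def by (simp add: sums_iff)
  moreover have "?W = exp (\<beta> * a0 * snd y) * exp (\<beta> * a1 * fst y)"
    by (simp add: fobs_def distrib_left exp_add mult.assoc)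
  ultimately show ?thesis
    by (cases "fst y = snd x") (simp_all add: Qm_def pair_weight_def field_simps)
qed

lemma pair_weight_double_sum:
  fixes K :: "nat \<Rightarrow> real" and a0 a1 \<beta> :: real
  shows "(\<Sum>t\<in>{-1, 1::int}. \<Sum>r\<in>{-1, 1::int}. exp (\<beta> * a0 * t) * pair_weight K a1 \<beta> t r)
     = lambda_value K a0 a1 \<beta>"
proof -
  define u v where "u = exp (\<beta> * a0)" and "v = exp (\<beta> * a1)"
  define ui vi where "ui = inverse u" and "vi = inverse v"
  have sum_pm1: "(\<Sum>t\<in>{-1, 1::int}. f t) = f (-1) + f 1" for f :: "int \<Rightarrow> real"
    by simp
  have exps: "exp (\<beta> * a0 * (-1)) = ui" "exp (\<beta> * a0 * 1) = u"
    "exp (\<beta> * a1 * (-1)) = vi" "exp (\<beta> * a1 * 1) = v"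
    by (simp_all add: u_def v_def ui_def vi_def exp_minus)
  have uv_sum: "exp (\<beta> * (a0 + a1)) = u * v"
    by (simp add: u_def v_def distrib_left exp_add)
  have coshs: "cosh (\<beta> * (a0 + a1)) = (u * v + ui * vi) / 2"
    "cosh (\<beta> * a0) = (u + ui) / 2" "cosh (\<beta> * a1) = (v + vi) / 2"
    unfolding cosh_def exp_minus uv_sum by (simp_all add: u_def v_def ui_def vi_def)
  have "(\<Sum>t\<in>{-1, 1::int}. \<Sum>r\<in>{-1, 1::int}. exp (\<beta> * a0 * t) * pair_weight K a1 \<beta> t r)
      = (1 + K 1) / 4 * (u * v + ui * vi) + (1 - K 1) / 4 * (u * vi + ui * v)"
    unfolding sum_pm1 pair_weight_def using exps by (simp add: field_simps)
  also have "\<dots> = lambda_value K a0 a1 \<beta>"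
    unfolding lambda_value_def coshs by (simp add: field_simps)
  finally show ?thesis .
qed

lemma Amat_pf_eigenvalue:
  fixes K :: "nat \<Rightarrow> real" and a0 a1 \<beta> :: real
  assumes Kpos: "\<And>n. n \<ge> 1 \<Longrightarrow> K n > 0" and Ksum: "(\<lambda>n. K (Suc n)) sums 1"
  shows "pf_eigenvalue (Amat K a0 a1 \<beta> 0) (lambda_value K a0 a1 \<beta>)"
proof -
  have \<Lambda>: "lambda_value K a0 a1 \<beta> > 0"
    by (rule lambda_value_pos[OF Kpos Ksum])
  have "pair_weight K a1 \<beta> 1 1 > 0" "pair_weight K a1 \<beta> 1 (-1) \<ge> 0"
    using K1_bounds[OF Kpos Ksum] by (simp_all add: pair_weight_def add_pos_nonneg)
  then have nz: "\<exists>s\<in>{-1, 1}. (\<Sum>r\<in>{-1, 1}. pair_weight K a1 \<beta> s r) \<noteq> 0"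
    by (intro bexI[of _ 1]) simp_all
  have form: "Amat K a0 a1 \<beta> 0 x y = exp (\<beta> * a0 * snd y) * pair_weight K a1 \<beta> (snd x) (fst y)"
    if "x \<in> Sig" "y \<in> Sig" for x y
    using Amat_entry[OF Ksum that] .
  have "(\<Sum>t\<in>{-1, 1::int}. \<Sum>r\<in>{-1, 1::int}. exp (\<beta> * a0 * t) * pair_weight K a1 \<beta> t r) \<ge> 0"
    unfolding pair_weight_double_sum using \<Lambda> by simp
  from pf_eigenvalue_product_form[OF form nz this]
  show ?thesis
    by (simp only: pair_weight_double_sum)
qed

theorem mainTheorem2:
  fixes K :: "nat \<Rightarrow> real" and a0 a1 \<beta> :: real
  assumes Kpos: "\<And>n. n \<ge> 1 \<Longrightarrow> K n > 0"
    and Ksum: "(\<lambda>n. K (Suc n)) sums 1"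
  shows "pf_eigenvalue (Amat K a0 a1 \<beta> 0)
           (cosh (a0 * \<beta>) * cosh (a1 * \<beta>) *
              (1 + K 1 * (cosh ((a0 + a1) * \<beta>) / (cosh (a0 * \<beta>) * cosh (a1 * \<beta>)) - 1)))
       \<and> hca K a0 a1 \<beta> = - ln (cosh (a0 * \<beta>) * cosh (a1 * \<beta>) *
              (1 + K 1 * (cosh ((a0 + a1) * \<beta>) / (cosh (a0 * \<beta>) * cosh (a1 * \<beta>)) - 1)))"
proof -
  have "cosh (a0 * \<beta>) * cosh (a1 * \<beta>) *
          (1 + K 1 * (cosh ((a0 + a1) * \<beta>) / (cosh (a0 * \<beta>) * cosh (a1 * \<beta>)) - 1))
      = lambda_value K a0 a1 \<beta>"
    by (simp add: lambda_value_def field_simps mult.commute)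
  then show ?thesis
    using Amat_pf_eigenvalue[OF Kpos Ksum] hca_eq[OF Kpos Ksum] by simp
qed

end
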